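(* The Petersen graph has, for no vertex $v$, two (nor three) level-disjoint partitions rooted in $v$ of optimal height, where optimal height for $k$ partitions in this non-bipartite graph means maximal height equal to $\mathrm{ecc}(v)+k-1=k+1$.
   Context: For $S\subseteq V(G)$, $N(S)$ is the set of vertices adjacent to some vertex of $S$. A level partition of $G$ is a tuple $\mathcal{S}=(S_0,\dots,S_h)$ of pairwise disjoint sets with union $V(G)$ such that $S_i\subseteq N(S_{i-1})$ for $1\le i\le h$; $h$ is its height; it is rooted in $v$ if $S_0=\{v\}$. Level partitions are level-disjoint if for every two of them $\mathcal{S},\mathcal{T}$, $S_i\cap T_i=\emptyset$ for every $1\le i\le\min$ of their heights. The Petersen graph is 3-regular, vertex-transitive, non-bipartite, of girth 5, with every vertex of eccentricity 2. *)

theory Defs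
  imports Main
begin

(* A graph is given by a vertex set V and a symmetric irreflexive adjacency relation E. *)

definition nbhd :: "('a \<Rightarrow> 'a \<Rightarrow> bool) \<Rightarrow> 'a set \<Rightarrow> 'a set" where
  "nbhd E S = {y. \<exists>x\<in>S. E x y}"

definition height :: "'a set list \<Rightarrow> nat" where
  "height Ss = length Ss - 1"

definition level_partition :: "'a set \<Rightarrow> ('a \<Rightarrow> 'a \<Rightarrow> bool) \<Rightarrow> 'a set list \<Rightarrow> bool" where
  "level_partition V E Ss \<longleftrightarrow>
     Ss \<noteq> [] \<and>
     (\<forall>i<length Ss. \<forall>j<length Ss. i \<noteq> j \<longrightarrow> Ss ! i \<inter> Ss ! j = {}) \<and>
     (\<Union>(set Ss)) = V \<and>
     (\<forall>i. 1 \<le> i \<and> i \<le> height Ss \<longrightarrow> Ss ! i \<subseteq> nbhd E (Ss ! (i - 1)))"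

definition rooted_in :: "'a \<Rightarrow> 'a set list \<Rightarrow> bool" where
  "rooted_in v Ss \<longleftrightarrow> Ss \<noteq> [] \<and> Ss ! 0 = {v}"

definition level_disjoint :: "'a set list list \<Rightarrow> bool" where
  "level_disjoint Ps \<longleftrightarrow>
     (\<forall>p<length Ps. \<forall>q<length Ps. p \<noteq> q \<longrightarrow>
        (\<forall>i. 1 \<le> i \<and> i \<le> min (height (Ps ! p)) (height (Ps ! q)) \<longrightarrow>
             (Ps ! p) ! i \<inter> (Ps ! q) ! i = {}))"

definition gdist :: "('a \<Rightarrow> 'a \<Rightarrow> bool) \<Rightarrow> 'a \<Rightarrow> 'a \<Rightarrow> nat" where
  "gdist E u w = (LEAST n. (E ^^ n) u w)"

definition ecc :: "'a set \<Rightarrow> ('a \<Rightarrow> 'a \<Rightarrow> bool) \<Rightarrow> 'a \<Rightarrow> nat" where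
  "ecc V E v = Max (gdist E v ` V)"

(* Petersen graph on {0..9}: outer 5-cycle 0..4, spokes i -- i+5, inner pentagram *)
definition petersen_V :: "nat set" where
  "petersen_V = {0..<10}"

definition petersen_E :: "nat \<Rightarrow> nat \<Rightarrow> bool" where
  "petersen_E x y \<longleftrightarrow> x \<in> petersen_V \<and> y \<in> petersen_V \<and>
     (\<exists>i<5. {x, y} = {i, (i + 1) mod 5} \<or> {x, y} = {i, i + 5}
            \<or> {x, y} = {i + 5, (i + 2) mod 5 + 5})"

end

(*
  Take a neighbour a of v lying on level 1 of one of the partitions. In every other
  partition rooted in v, a cannot lie on level 1 (level-disjointness), nor on level 2 or 3,
  since together with the edge va the level structure would then close a cycle of length
  3 or 4 through v. So a lies on level at least 4 in each of the other k - 1 partitions,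
  and on pairwise different levels there, again by level-disjointness. Hence some partition
  has height at least k + 2, whereas ecc(v) + k - 1 = k + 1 in the Petersen graph.
*)
theory Submission
  imports Defs
begin

(* No loops, triangles or 4-cycles: a closed walk of length 4 can only retrace itself. *)
definition girth_ge_5 :: "('a \<Rightarrow> 'a \<Rightarrow> bool) \<Rightarrow> bool" where
  "girth_ge_5 E \<longleftrightarrow>
     (\<forall>x y z. E x y \<longrightarrow> E y z \<longrightarrow> \<not> E z x) \<and>
     (\<forall>w x y z. E w x \<longrightarrow> E x y \<longrightarrow> E y z \<longrightarrow> E z w \<longrightarrow> w = y \<or> x = z)"

lemma girth_ge_5_no_loop: "girth_ge_5 E \<Longrightarrow> \<not> E x x"
  unfolding girth_ge_5_def by blast

lemma girth_ge_5_no_triangle: "girth_ge_5 E \<Longrightarrow> E x y \<Longrightarrow> E y z \<Longrightarrow> \<not> E z x"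
  unfolding girth_ge_5_def by blast

lemma girth_ge_5_no_square:
  "girth_ge_5 E \<Longrightarrow> E w x \<Longrightarrow> E x y \<Longrightarrow> E y z \<Longrightarrow> E z w \<Longrightarrow> w = y \<or> x = z"
  unfolding girth_ge_5_def by blast

lemma level_partition_level_eq:
  assumes "level_partition V E Q" "i < length Q" "j < length Q" "x \<in> Q ! i" "x \<in> Q ! j"
  shows "i = j"
  using assms unfolding level_partition_def by blast

lemma level_partition_covers:
  assumes "level_partition V E Q" "x \<in> V"
  obtains i where "i < length Q" "x \<in> Q ! i"
  using assms unfolding level_partition_def by (metis UnionE in_set_conv_nth)

lemma level_partition_subset:
  assumes "level_partition V E Q" "i < length Q"
  shows "Q ! i \<subseteq> V"
  using assms unfolding level_partition_def by (metis Union_upper nth_mem)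

lemma level_partition_pred:
  assumes "level_partition V E Q" "1 \<le> i" "i < length Q" "x \<in> Q ! i"
  obtains y where "y \<in> Q ! (i - 1)" "E y x"
proof -
  have "Q ! i \<subseteq> nbhd E (Q ! (i - 1))"
    using assms(1-3) unfolding level_partition_def height_def by auto
  with assms(4) that show thesis unfolding nbhd_def by blast
qed

lemma level_partition_levels_nonempty:
  assumes "level_partition V E Q" "i < length Q" "x \<in> Q ! i" "j \<le> i"
  shows "Q ! j \<noteq> {}"
  using assms(2-4)
proof (induction i arbitrary: x)
  case (Suc i)
  obtain y where "y \<in> Q ! i" using level_partition_pred[OF assms(1), of "Suc i" x] Suc.prems by auto
  with Suc show ?case by (cases "j = Suc i") auto
qed auto

lemma rooted_level_partition_level_1:
  assumes "level_partition V E Q" "rooted_in v Q" "1 < length Q" "x \<in> Q ! 1"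
  shows "E v x"
  using level_partition_pred[OF assms(1) _ assms(3,4)] assms(2) by (auto simp: rooted_in_def)

lemma rooted_level_partition_level_1_nonempty:
  assumes "level_partition V E Q" "rooted_in v Q" "u \<in> V" "u \<noteq> v"
  shows "1 < length Q" "Q ! 1 \<noteq> {}"
proof -
  obtain i where i: "i < length Q" "u \<in> Q ! i"
    using level_partition_covers[OF assms(1,3)] .
  have "i \<noteq> 0"
  proof
    assume "i = 0"
    with i(2) assms(2) have "u = v" by (simp add: rooted_in_def)
    with assms(4) show False ..
  qed
  then show "1 < length Q" using i(1) by linarith
  show "Q ! 1 \<noteq> {}"
    using level_partition_levels_nonempty[OF assms(1) i] \<open>i \<noteq> 0\<close> by simp
qed

lemma girth_ge_5_neighbour_level_ge_4:
  assumes lp: "level_partition V E Q" and root: "rooted_in v Q" and girth: "girth_ge_5 E"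
    and av: "E a v" and not_1: "a \<notin> Q ! 1" and i: "i < length Q" "a \<in> Q ! i"
  shows "4 \<le> i"
proof -
  have level_0: "Q ! 0 = {v}" using root by (simp add: rooted_in_def)
  have "i \<noteq> 0"
  proof
    assume "i = 0"
    then have "a = v" using i level_0 by simp
    then show False using av girth_ge_5_no_loop[OF girth] by simp
  qed
  moreover have "i \<noteq> 1" using i not_1 by auto
  moreover have "i \<noteq> 2"
  proof
    assume "i = 2"
    then obtain x where "x \<in> Q ! 1" "E x a" using level_partition_pred[OF lp _ i] by auto
    moreover have "E v x" using rooted_level_partition_level_1[OF lp root] \<open>i = 2\<close> i \<open>x \<in> Q ! 1\<close> by auto
    ultimately show False using girth_ge_5_no_triangle[OF girth] av by blast
  qed
  moreover have "i \<noteq> 3"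
  proof
    assume "i = 3"
    then obtain y where y: "y \<in> Q ! 2" "E y a" using level_partition_pred[OF lp _ i] by auto
    obtain x where x: "x \<in> Q ! 1" "E x y"
      using level_partition_pred[OF lp _ _ y(1)] \<open>i = 3\<close> i by auto
    have "E v x" using rooted_level_partition_level_1[OF lp root _ x(1)] \<open>i = 3\<close> i by auto
    then have "v = y \<or> x = a" using girth_ge_5_no_square[OF girth] x(2) y(2) av by blast
    moreover have "v \<noteq> y"
    proof
      assume "v = y"
      have "(0::nat) = 2"
        by (rule level_partition_level_eq[OF lp _ _ _ y(1)]) (use level_0 \<open>v = y\<close> \<open>i = 3\<close> i in auto)
      then show False by simp
    qed
    ultimately show False using x(1) not_1 by auto
  qed
  ultimately show ?thesis by linarith
qed

lemma level_disjoint_level_eq: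
  assumes "level_disjoint Ps" "p < length Ps" "q < length Ps"
    "1 \<le> i" "i \<le> height (Ps ! p)" "i \<le> height (Ps ! q)" "x \<in> Ps ! p ! i" "x \<in> Ps ! q ! i"
  shows "p = q"
  using assms unfolding level_disjoint_def by auto

theorem girth_ge_5_level_disjoint_height_ge:
  assumes sym: "symp E" and girth: "girth_ge_5 E" and u: "u \<in> V" "u \<noteq> v"
    and k: "2 \<le> length Ps"
    and lps: "\<forall>P\<in>set Ps. level_partition V E P \<and> rooted_in v P"
    and disj: "level_disjoint Ps"
  shows "length Ps + 2 \<le> Max (height ` set Ps)"
proof -
  define k M where "k = length Ps" and "M = Max (height ` set Ps)"
  have lp: "level_partition V E (Ps ! p)" "rooted_in v (Ps ! p)" if "p < k" for p
    using lps nth_mem that unfolding k_def by blast+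
  have height_le_M: "height (Ps ! p) \<le> M" if "p < k" for p
    unfolding M_def using that k_def by (intro Max_ge) auto
  have "0 < k" using k by (auto simp: k_def)
  note lp_0 = lp[OF this]
  have len_0: "1 < length (Ps ! 0)"
    using rooted_level_partition_level_1_nonempty(1)[OF lp_0 u] .
  obtain a where a: "a \<in> Ps ! 0 ! 1"
    using rooted_level_partition_level_1_nonempty(2)[OF lp_0 u] by blast
  have "E v a" using rooted_level_partition_level_1[OF lp_0 len_0 a] .
  then have av: "E a v" using sym by (simp add: symp_def)
  have a_V: "a \<in> V" using level_partition_subset[OF lp_0(1) len_0] a by blast
  have "\<exists>i. 4 \<le> i \<and> i \<le> height (Ps ! q) \<and> a \<in> Ps ! q ! i" if q: "q \<in> {1..<k}" for q
  proof -
    have lp_q: "level_partition V E (Ps ! q)" "rooted_in v (Ps ! q)" using lp q by auto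
    have "1 < length (Ps ! q)"
      using rooted_level_partition_level_1_nonempty(1)[OF lp_q u] .
    then have "a \<notin> Ps ! q ! 1"
      using level_disjoint_level_eq[OF disj, of 0 q 1 a] q a len_0 by (force simp: k_def height_def)
    moreover obtain i where i: "i < length (Ps ! q)" "a \<in> Ps ! q ! i"
      using level_partition_covers[OF lp_q(1) a_V] .
    ultimately have "4 \<le> i"
      using girth_ge_5_neighbour_level_ge_4[OF lp_q girth av] by blast
    with i show ?thesis by (intro exI[of _ i]) (auto simp: height_def)
  qed
  then obtain level where level: "\<And>q. q \<in> {1..<k} \<Longrightarrow>
      4 \<le> level q \<and> level q \<le> height (Ps ! q) \<and> a \<in> Ps ! q ! level q"
    by metis
  have "inj_on level {1..<k}"
  proof (rule inj_onI)
    fix p q assume p: "p \<in> {1..<k}" and q: "q \<in> {1..<k}" and eq: "level p = level q"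
    show "p = q"
      by (rule level_disjoint_level_eq[OF disj, of p q "level p" a])
        (use level[OF p] level[OF q] p q eq in \<open>auto simp: k_def\<close>)
  qed
  moreover have "level ` {1..<k} \<subseteq> {4..M}"
    using level height_le_M by fastforce
  ultimately have "card {1..<k} \<le> card {4..M}"
    by (intro card_inj_on_le) auto
  then show ?thesis using k by (simp add: k_def M_def)
qed

lemma ecc_le:
  assumes "finite V" "V \<noteq> {}" "\<And>w. w \<in> V \<Longrightarrow> \<exists>n\<le>d. (E ^^ n) v w"
  shows "ecc V E v \<le> d"
proof -
  have "(LEAST n. (E ^^ n) v w) \<le> d" if "w \<in> V" for w
    using assms(3)[OF that] by (meson Least_le order_trans)
  then show ?thesis
    using assms(1,2) by (simp add: ecc_def gdist_def)
qed

definition petersen_nbrs :: "nat \<Rightarrow> nat set" where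
  "petersen_nbrs x =
    (if x = 0 then {1,4,5} else if x = 1 then {0,2,6} else if x = 2 then {1,3,7}
     else if x = 3 then {2,4,8} else if x = 4 then {3,0,9} else if x = 5 then {0,7,8}
     else if x = 6 then {1,8,9} else if x = 7 then {2,5,9} else if x = 8 then {3,5,6}
     else if x = 9 then {4,6,7} else {})"

lemma petersen_V_eq: "petersen_V = {0,1,2,3,4,5,6,7,8,9}"
  by (auto simp: petersen_V_def)

lemma ex_less_5: "(\<exists>i<(5::nat). P i) \<longleftrightarrow> P 0 \<or> P 1 \<or> P 2 \<or> P 3 \<or> P 4"
  unfolding lessThan_iff[symmetric] Bex_def[symmetric]
  by (simp add: lessThan_nat_numeral lessThan_Suc disj_commute disj_left_commute)

lemma petersen_E_iff: "petersen_E x y \<longleftrightarrow> x \<in> petersen_V \<and> y \<in> petersen_nbrs x"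
proof -
  have "\<forall>x\<in>petersen_V. \<forall>y. petersen_E x y \<longleftrightarrow> y \<in> petersen_nbrs x"
    unfolding petersen_V_eq petersen_E_def petersen_nbrs_def ex_less_5
    by (simp add: doubleton_eq_iff, auto)
  moreover have "petersen_E x y \<Longrightarrow> x \<in> petersen_V"
    by (simp add: petersen_E_def)
  ultimately show ?thesis by blast
qed

lemma symp_petersen_E: "symp petersen_E"
proof (rule sympI)
  fix x y assume "petersen_E x y"
  then show "petersen_E y x"
    unfolding petersen_E_def by (simp only: insert_commute[of y x])
qed

lemma girth_ge_5_petersen: "girth_ge_5 petersen_E"
proof -
  have "\<forall>x\<in>petersen_V. \<forall>y\<in>petersen_nbrs x. \<forall>z\<in>petersen_nbrs y. x \<notin> petersen_nbrs z"
    "\<forall>w\<in>petersen_V. \<forall>x\<in>petersen_nbrs w. \<forall>y\<in>petersen_nbrs x. \<forall>z\<in>petersen_nbrs y.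
       w \<in> petersen_nbrs z \<longrightarrow> w = y \<or> x = z"
    unfolding petersen_V_eq by (simp_all add: petersen_nbrs_def)
  then show ?thesis
    unfolding girth_ge_5_def petersen_E_iff by blast
qed

lemma ecc_petersen_le_2:
  assumes "v \<in> petersen_V"
  shows "ecc petersen_V petersen_E v \<le> 2"
proof (rule ecc_le)
  show "finite petersen_V" "petersen_V \<noteq> {}" by (simp_all add: petersen_V_eq)
  have dist_le_2: "\<forall>v\<in>petersen_V. \<forall>w\<in>petersen_V.
      w = v \<or> w \<in> petersen_nbrs v \<or> (\<exists>y\<in>petersen_nbrs v. w \<in> petersen_nbrs y)"
    unfolding petersen_V_eq by (simp add: petersen_nbrs_def)
  fix w assume w: "w \<in> petersen_V"
  consider "w = v" | "petersen_E v w" | y where "petersen_E v y" "petersen_E y w"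
    using dist_le_2 assms w petersen_E_iff symp_petersen_E by (metis sympD)
  then show "\<exists>n\<le>2. (petersen_E ^^ n) v w"
  proof cases
    case 1 then show ?thesis by (intro exI[of _ 0]) auto
  next
    case 2 then show ?thesis by (intro exI[of _ 1]) auto
  next
    case 3 then show ?thesis by (intro exI[of _ 2]) (auto simp: numeral_2_eq_2)
  qed
qed

theorem mainTheorem8:
  assumes "v \<in> petersen_V" and "k \<in> {2, 3}"
  shows "\<not> (\<exists>Ps. length Ps = k \<and>
              (\<forall>P\<in>set Ps. level_partition petersen_V petersen_E P \<and> rooted_in v P) \<and>
              level_disjoint Ps \<and>
              Max (height ` set Ps) = ecc petersen_V petersen_E v + k - 1)"
proof -
  obtain u where u: "u \<in> petersen_V" "u \<noteq> v"
    using assms(1) by (metis insertCI petersen_V_eq zero_neq_one)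
  have "Max (height ` set Ps) \<noteq> ecc petersen_V petersen_E v + k - 1"
    if len: "length Ps = k"
      and lps: "\<forall>P\<in>set Ps. level_partition petersen_V petersen_E P \<and> rooted_in v P"
      and disj: "level_disjoint Ps" for Ps
  proof -
    have "2 \<le> length Ps" using len assms(2) by auto
    then have "k + 2 \<le> Max (height ` set Ps)"
      using girth_ge_5_level_disjoint_height_ge[OF symp_petersen_E girth_ge_5_petersen u _ lps disj] len
      by simp
    then show ?thesis using ecc_petersen_le_2[OF assms(1)] by linarith
  qed
  then show ?thesis by blast
qed

end
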